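(* Let $R$ be a UFD of characteristic $p>0$, $R[x,y]$ the polynomial ring in two variables, $0\ne a\in R$, $0\ne\theta(y)=\sum_{i\ge1}s_iy^i\in yR[y]$, $f:=ax+\theta(y)$, and $0\ne F\in R[f]$. Let $\phi\in\operatorname{Aut}_RR[x,y]$ be given by $\phi(y)=y+aF$ and $\phi(x)=x+a^{-1}(\theta(y)-\theta(y+aF))$. Let $d:=\gcd(a,\theta'(y))\in R$, $b:=a/d$, $\theta^*(y):=\sum_{i\ge1}s_{pi}y^i$, $q:=y^p-(aF)^{p-1}y$ and $q_1:=d^{-1}(f-\theta^*(q))$. Then $R[x,y]^{\phi}=R_b[q_1,q]\cap R[x,y]$, where $R_b:=R[b^{-1}]$ and the intersection is taken in $R_a[x,y]$.
   Context: $\theta'(y)$ is the formal derivative; $d$ is a greatest common divisor in $R[y]$ of $a$ and $\theta'(y)$, which may be taken in $R$ (if $\theta'(y)=0$, $d=a$). $R[x,y]^{\phi}:=\{u\mid\phi(u)=u\}$. $R_a:=R[a^{-1}]$. The element $q_1$ lies in $R[x,y]$ and in $R[x,y]^{\phi}$. *)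

theory Defs
  imports "HOL-Computational_Algebra.Polynomial" "HOL-Computational_Algebra.Fraction_Field"
    "HOL-Computational_Algebra.Polynomial_Factorial"
begin

text \<open>Bivariate polynomials over a ring A are represented as A poly poly:
  the outer variable is y, the inner variable (in the coefficients) is x.\<close>

definition C2 :: "'a::comm_ring_1 \<Rightarrow> 'a poly poly" where
  "C2 c = [:[:c:]:]"

definition Xv :: "'a::comm_ring_1 poly poly" where
  "Xv = [:[:0, 1:]:]"

definition Yv :: "'a::comm_ring_1 poly poly" where
  "Yv = [:0, 1:]"

definition subst2 :: "'a::comm_ring_1 poly poly \<Rightarrow> 'a poly poly \<Rightarrow> 'a poly poly \<Rightarrow> 'a poly poly" where
  "subst2 P U V = poly (map_poly (\<lambda>c. poly (map_poly C2 c) U) P) V"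

definition eval1 :: "'a::comm_ring_1 poly \<Rightarrow> 'a poly poly \<Rightarrow> 'a poly poly" where
  "eval1 g U = poly (map_poly C2 g) U"

definition emb2 :: "'a::idom poly poly \<Rightarrow> 'a fract poly poly" where
  "emb2 u = map_poly (map_poly to_fract) u"

definition Rxy :: "'a::idom fract poly poly set" where
  "Rxy = range emb2"

definition Rloc :: "'a::idom \<Rightarrow> 'a fract set" where
  "Rloc b = {to_fract r / to_fract b ^ n | r n. True}"

definition theta_star :: "nat \<Rightarrow> 'a::comm_ring_1 poly \<Rightarrow> 'a poly" where
  "theta_star p \<theta> = (\<Sum>i\<in>{1..degree \<theta>}. monom (coeff \<theta> (p * i)) i)"

end

theory Submission
  imports Defs "HOL-Computational_Algebra.Primes"
begin

text \<open>
  The change of variables \<open>x \<mapsto> (x - \<theta>(y))/a\<close> turns \<open>f\<close> into \<open>x\<close> and \<open>\<phi>\<close> into the translation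
  \<open>y \<mapsto> y + c\<close> with \<open>c = a G(x)\<close>, acting on \<open>K[x][y]\<close>. In characteristic \<open>p\<close> the degree of a
  translation invariant is divisible by \<open>p\<close>, and peeling off leading terms writes it as a polynomial in
  the orbit product \<open>y\<^sup>p - c\<^sup>p\<^sup>-\<^sup>1 y\<close>, with coefficients in \<open>R\<^sub>a[x]\<close>. Undoing the change of variables, every
  invariant lies in \<open>R\<^sub>a[f, q]\<close>, hence in \<open>R\<^sub>a[q\<^sub>1, q]\<close> because \<open>f = d q\<^sub>1 + \<theta>\<^sup>*(q)\<close>.

  It remains to shrink the denominators from powers of \<open>a\<close> to powers of \<open>b = a/d\<close>. A prime \<open>\<pi>\<close>
  dividing \<open>a\<close> but not \<open>b\<close> divides \<open>d\<close>, and modulo \<open>\<pi>\<close> one has \<open>q\<^sub>1 \<equiv> b x + e(y)\<close> and \<open>q \<equiv> y\<^sup>p\<close>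
  (this uses \<open>d \<bar> \<theta>'\<close>, which makes \<open>\<theta>(y) \<equiv> \<theta>\<^sup>*(y\<^sup>p)\<close> modulo \<open>d\<close>). The substitution
  \<open>x \<mapsto> b x + e(y), y \<mapsto> y\<^sup>p\<close> is injective modulo \<open>\<pi>\<close>, so \<open>\<pi>\<close> cancels from every denominator.
\<close>

section \<open>Ring homomorphisms and substitution in two variables\<close>

definition is_ring_hom :: "('a::comm_ring_1 \<Rightarrow> 'b::comm_ring_1) \<Rightarrow> bool" where
  "is_ring_hom h \<longleftrightarrow> h 1 = 1 \<and> (\<forall>x y. h (x + y) = h x + h y) \<and> (\<forall>x y. h (x * y) = h x * h y)"

lemma is_ring_hom_1: "is_ring_hom h \<Longrightarrow> h 1 = 1"
  by (simp add: is_ring_hom_def)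

lemma is_ring_hom_add: "is_ring_hom h \<Longrightarrow> h (x + y) = h x + h y"
  by (simp add: is_ring_hom_def)

lemma is_ring_hom_mult: "is_ring_hom h \<Longrightarrow> h (x * y) = h x * h y"
  by (simp add: is_ring_hom_def)

lemma is_ring_hom_0: "is_ring_hom h \<Longrightarrow> h 0 = 0"
  using is_ring_hom_add[of h 0 0] by simp

lemma is_ring_hom_diff: "is_ring_hom h \<Longrightarrow> h (x - y) = h x - h y"
  using is_ring_hom_add[of h "x - y" y] by (simp add: eq_diff_eq)

lemma is_ring_hom_power: "is_ring_hom h \<Longrightarrow> h (x ^ n) = h x ^ n"
  by (induct n) (simp_all add: is_ring_hom_1 is_ring_hom_mult)

lemma is_ring_hom_sum: "is_ring_hom h \<Longrightarrow> h (sum f A) = (\<Sum>i\<in>A. h (f i))"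
  by (induct A rule: infinite_finite_induct) (simp_all add: is_ring_hom_0 is_ring_hom_add)

lemma is_ring_hom_comp: "is_ring_hom g \<Longrightarrow> is_ring_hom h \<Longrightarrow> is_ring_hom (\<lambda>x. g (h x))"
  by (simp add: is_ring_hom_def)

lemma is_ring_hom_map_poly:
  assumes h: "is_ring_hom h"
  shows "is_ring_hom (map_poly h)"
proof -
  have h0: "h 0 = 0"
    using h by (rule is_ring_hom_0)
  have "map_poly h (p + q) = map_poly h p + map_poly h q" for p q
    by (rule poly_eqI) (simp add: coeff_map_poly h0 is_ring_hom_add[OF h])
  moreover have "map_poly h (p * q) = map_poly h p * map_poly h q" for p q
    by (rule poly_eqI)
       (simp add: coeff_map_poly h0 coeff_mult is_ring_hom_sum[OF h] is_ring_hom_mult[OF h])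
  ultimately show ?thesis
    by (simp add: is_ring_hom_def is_ring_hom_1[OF h])
qed

lemma is_ring_hom_poly_map_poly: "is_ring_hom h \<Longrightarrow> is_ring_hom (\<lambda>p. poly (map_poly h p) v)"
  by (rule is_ring_hom_comp[OF _ is_ring_hom_map_poly]) (simp add: is_ring_hom_def)

lemma is_ring_hom_C2: "is_ring_hom C2"
  by (simp add: is_ring_hom_def C2_def pCons_one)

lemma is_ring_hom_subst2: "is_ring_hom (\<lambda>W. subst2 W U V)"
  unfolding subst2_def by (intro is_ring_hom_poly_map_poly is_ring_hom_C2)

lemma is_ring_hom_eval1: "is_ring_hom (\<lambda>g. eval1 g U)"
  unfolding eval1_def by (intro is_ring_hom_poly_map_poly is_ring_hom_C2)

lemma is_ring_hom_emb2: "is_ring_hom emb2"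
proof -
  have "emb2 = map_poly (map_poly to_fract)"
    by (simp add: fun_eq_iff emb2_def)
  moreover have "is_ring_hom (to_fract :: 'a::idom \<Rightarrow> _)"
    by (simp add: is_ring_hom_def)
  ultimately show ?thesis
    by (metis is_ring_hom_map_poly)
qed

lemma C2_pCons_eq: "[:pCons r c:] = C2 r + Xv * [:c:]"
  unfolding C2_def Xv_def by simp

lemma pCons_eq_const_plus_Yv: "pCons c W = [:c:] + Yv * W"
  unfolding Yv_def by simp

lemma bivariate_induct_coeffs_in:
  fixes Pr :: "'a::comm_ring_1 poly poly \<Rightarrow> bool"
  assumes W: "\<forall>i j. coeff (coeff W i) j \<in> S" and S0: "0 \<in> S"
    and C: "\<And>c. c \<in> S \<Longrightarrow> Pr (C2 c)" and X: "Pr Xv" and Y: "Pr Yv"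
    and A: "\<And>A B. Pr A \<Longrightarrow> Pr B \<Longrightarrow> Pr (A + B)"
    and M: "\<And>A B. Pr A \<Longrightarrow> Pr B \<Longrightarrow> Pr (A * B)"
  shows "Pr W"
proof -
  have Pr0: "Pr 0"
    using C[OF S0] by (simp add: C2_def)
  have const: "Pr [:c:]" if "\<forall>j. coeff c j \<in> S" for c
    using that
  proof (induct c)
    case (pCons r c)
    have "r \<in> S"
      using pCons(3)[rule_format, of 0] by simp
    moreover have "Pr [:c:]"
      using pCons(2) pCons(3)[rule_format, of "Suc j" for j] by simp
    ultimately show ?case
      using C2_pCons_eq[of r c] C X A M by metis
  qed (simp add: Pr0)
  show ?thesis
    using W
  proof (induct W)
    case (pCons c W)
    have "Pr [:c:]"
      using const pCons(3)[rule_format, of 0] by simp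
    moreover have "Pr W"
      using pCons(2) pCons(3)[rule_format, of "Suc i" for i] by simp
    ultimately show ?case
      using pCons_eq_const_plus_Yv[of c W] Y A M by metis
  qed (simp add: Pr0)
qed

lemma bivariate_induct:
  fixes Pr :: "'a::comm_ring_1 poly poly \<Rightarrow> bool"
  assumes "\<And>c. Pr (C2 c)" "Pr Xv" "Pr Yv"
    and "\<And>A B. Pr A \<Longrightarrow> Pr B \<Longrightarrow> Pr (A + B)" "\<And>A B. Pr A \<Longrightarrow> Pr B \<Longrightarrow> Pr (A * B)"
  shows "Pr W"
  by (rule bivariate_induct_coeffs_in[where S = UNIV]) (use assms in auto)

lemma ring_hom_bivariate_eqI:
  fixes H1 H2 :: "'a::comm_ring_1 poly poly \<Rightarrow> 'b::comm_ring_1"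
  assumes "is_ring_hom H1" "is_ring_hom H2"
    and "\<And>c. H1 (C2 c) = H2 (C2 c)" "H1 Xv = H2 Xv" "H1 Yv = H2 Yv"
  shows "H1 W = H2 W"
  by (rule bivariate_induct[of "\<lambda>W. H1 W = H2 W"])
     (simp_all add: assms is_ring_hom_add is_ring_hom_mult)

lemma map_poly_const [simp]: "f 0 = 0 \<Longrightarrow> map_poly f [:c:] = [:f c:]"
  by (simp add: map_poly_pCons)

lemma C2_0 [simp]: "C2 0 = 0"
  by (simp add: C2_def)

lemma C2_1 [simp]: "C2 1 = 1"
  by (rule is_ring_hom_1[OF is_ring_hom_C2])

lemma C2_mult: "C2 (x * y) = C2 x * C2 y"
  by (rule is_ring_hom_mult[OF is_ring_hom_C2])

lemma C2_power: "C2 (x ^ n) = C2 x ^ n"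
  by (rule is_ring_hom_power[OF is_ring_hom_C2])

lemma C2_eq_0_iff [simp]: "C2 x = 0 \<longleftrightarrow> x = 0"
  by (simp add: C2_def)

lemma C2_inverse_cancel:
  fixes x :: "'a::field"
  shows "x \<noteq> 0 \<Longrightarrow> C2 x * C2 (inverse x) = 1"
  by (simp flip: C2_mult)

lemma C2_dvd_iff:
  fixes W :: "'a::idom poly poly"
  shows "C2 c dvd W \<longleftrightarrow> (\<forall>i j. c dvd coeff (coeff W i) j)"
  unfolding C2_def by (simp add: const_poly_dvd_iff)

lemma subst2_C2 [simp]: "subst2 (C2 c) U V = C2 c"
  unfolding subst2_def C2_def by (simp add: map_poly_pCons)

lemma subst2_Xv [simp]: "subst2 Xv U V = U"
  unfolding subst2_def Xv_def C2_def by (simp add: map_poly_pCons pCons_one)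

lemma subst2_Yv [simp]: "subst2 Yv U V = V"
  unfolding subst2_def Yv_def C2_def by (simp add: map_poly_pCons pCons_one map_poly_1)

lemma subst2_add [simp]: "subst2 (A + B) U V = subst2 A U V + subst2 B U V"
  by (rule is_ring_hom_add[OF is_ring_hom_subst2])

lemma subst2_mult [simp]: "subst2 (A * B) U V = subst2 A U V * subst2 B U V"
  by (rule is_ring_hom_mult[OF is_ring_hom_subst2])

lemma subst2_diff [simp]: "subst2 (A - B) U V = subst2 A U V - subst2 B U V"
  by (rule is_ring_hom_diff[OF is_ring_hom_subst2])

lemma subst2_power [simp]: "subst2 (A ^ n) U V = subst2 A U V ^ n"
  by (rule is_ring_hom_power[OF is_ring_hom_subst2])

lemma subst2_subst2: "subst2 (subst2 W A B) U V = subst2 W (subst2 A U V) (subst2 B U V)"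
  by (rule ring_hom_bivariate_eqI)
     (simp_all add: is_ring_hom_comp[OF is_ring_hom_subst2 is_ring_hom_subst2] is_ring_hom_subst2)

lemma subst2_Xv_Yv: "subst2 W Xv Yv = W"
  by (rule ring_hom_bivariate_eqI[of "\<lambda>W. subst2 W Xv Yv" "\<lambda>W. W"])
     (simp_all add: is_ring_hom_subst2 is_ring_hom_def)

lemma eval1_pCons [simp]: "eval1 (pCons c g) U = C2 c + U * eval1 g U"
  by (simp add: eval1_def map_poly_pCons)

lemma eval1_0 [simp]: "eval1 0 U = 0"
  by (simp add: eval1_def)

lemma ring_hom_eval1:
  assumes "is_ring_hom H" "\<And>c. H (C2 c) = C2 c"
  shows "H (eval1 g U) = eval1 g (H U)"
  by (induct g) (simp_all add: assms is_ring_hom_0 is_ring_hom_add is_ring_hom_mult)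

lemma subst2_eval1 [simp]: "subst2 (eval1 g W) U V = eval1 g (subst2 W U V)"
  by (rule ring_hom_eval1[OF is_ring_hom_subst2]) simp

lemma eval1_add: "eval1 (g + h) U = eval1 g U + eval1 h U"
  by (rule is_ring_hom_add[OF is_ring_hom_eval1])

lemma eval1_Xv: "eval1 c Xv = [:c:]"
  by (induct c) (simp_all add: C2_pCons_eq)

lemma eval1_pcompose: "eval1 (pcompose g h) U = eval1 g (eval1 h U)"
  by (induct g)
     (simp_all add: pcompose_pCons is_ring_hom_add[OF is_ring_hom_eval1]
       is_ring_hom_mult[OF is_ring_hom_eval1])

lemma eval1_smult: "eval1 (smult c g) U = C2 c * eval1 g U"
  by (induct g) (simp_all add: C2_mult algebra_simps)

lemma eval1_monom_1: "eval1 (monom 1 n) U = U ^ n"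
  by (induct n) (simp_all add: monom_0 monom_Suc)

lemma subst2_Xv_eq_pcompose: "subst2 W Xv V = pcompose W V"
proof -
  have "(\<lambda>c. poly (map_poly C2 c) Xv) = (\<lambda>c. [:c:])"
    using eval1_Xv unfolding eval1_def by blast
  then show ?thesis
    unfolding subst2_def pcompose_altdef by (rule arg_cong[where f = "\<lambda>h. poly (map_poly h W) V"])
qed

lemma emb2_C2 [simp]: "emb2 (C2 c) = C2 (to_fract c)"
  unfolding emb2_def C2_def by simp

lemma emb2_Xv [simp]: "emb2 Xv = Xv"
  unfolding emb2_def Xv_def by (simp add: map_poly_pCons)

lemma emb2_Yv [simp]: "emb2 Yv = Yv"
  unfolding emb2_def Yv_def by (simp add: map_poly_pCons)

lemma emb2_add [simp]: "emb2 (A + B) = emb2 A + emb2 B"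
  by (rule is_ring_hom_add[OF is_ring_hom_emb2])

lemma emb2_mult [simp]: "emb2 (A * B) = emb2 A * emb2 B"
  by (rule is_ring_hom_mult[OF is_ring_hom_emb2])

lemma emb2_diff [simp]: "emb2 (A - B) = emb2 A - emb2 B"
  by (rule is_ring_hom_diff[OF is_ring_hom_emb2])

lemma emb2_power [simp]: "emb2 (A ^ n) = emb2 A ^ n"
  by (rule is_ring_hom_power[OF is_ring_hom_emb2])

lemma emb2_eval1 [simp]: "emb2 (eval1 g U) = eval1 (map_poly to_fract g) (emb2 U)"
  by (induct g) (simp_all add: map_poly_pCons is_ring_hom_0[OF is_ring_hom_emb2])

lemma emb2_subst2: "emb2 (subst2 W U V) = subst2 (emb2 W) (emb2 U) (emb2 V)"
  by (rule ring_hom_bivariate_eqI)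
     (simp_all add: is_ring_hom_comp[OF is_ring_hom_emb2 is_ring_hom_subst2]
       is_ring_hom_comp[OF is_ring_hom_subst2 is_ring_hom_emb2])

lemma coeff_emb2 [simp]: "coeff (coeff (emb2 A) i) j = to_fract (coeff (coeff A i) j)"
  unfolding emb2_def by (simp add: coeff_map_poly)

lemma emb2_inject: "emb2 A = emb2 B \<Longrightarrow> A = B"
  by (metis coeff_emb2 poly_eqI to_fract_eq_iff)

section \<open>Coefficients in a subring\<close>

definition is_subring :: "'a::comm_ring_1 set \<Rightarrow> bool" where
  "is_subring S \<longleftrightarrow> 0 \<in> S \<and> 1 \<in> S \<and> (\<forall>x\<in>S. \<forall>y\<in>S. x + y \<in> S \<and> x * y \<in> S \<and> - x \<in> S)"

lemma is_subring_0: "is_subring S \<Longrightarrow> 0 \<in> S"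
  by (simp add: is_subring_def)

lemma is_subring_1: "is_subring S \<Longrightarrow> 1 \<in> S"
  by (simp add: is_subring_def)

lemma is_subring_add: "is_subring S \<Longrightarrow> x \<in> S \<Longrightarrow> y \<in> S \<Longrightarrow> x + y \<in> S"
  by (simp add: is_subring_def)

lemma is_subring_mult: "is_subring S \<Longrightarrow> x \<in> S \<Longrightarrow> y \<in> S \<Longrightarrow> x * y \<in> S"
  by (simp add: is_subring_def)

lemma is_subring_diff: "is_subring S \<Longrightarrow> x \<in> S \<Longrightarrow> y \<in> S \<Longrightarrow> x - y \<in> S"
  using is_subring_add[of S x "- y"] by (simp add: is_subring_def)

lemma is_subring_power: "is_subring S \<Longrightarrow> x \<in> S \<Longrightarrow> x ^ n \<in> S"
  by (induct n) (simp_all add: is_subring_1 is_subring_mult)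

lemma is_subring_sum: "is_subring S \<Longrightarrow> (\<And>i. i \<in> A \<Longrightarrow> f i \<in> S) \<Longrightarrow> sum f A \<in> S"
  by (induct A rule: infinite_finite_induct) (simp_all add: is_subring_0 is_subring_add)

definition polys_over :: "'a::comm_ring_1 set \<Rightarrow> 'a poly set" where
  "polys_over S = {p. \<forall>i. coeff p i \<in> S}"

lemma is_subring_polys_over: "is_subring S \<Longrightarrow> is_subring (polys_over S)"
  unfolding is_subring_def polys_over_def
  by (auto simp: coeff_mult coeff_1 intro!: is_subring_sum[unfolded is_subring_def])

lemma const_in_polys_over: "is_subring S \<Longrightarrow> c \<in> S \<Longrightarrow> [:c:] \<in> polys_over S"
  by (auto simp: polys_over_def coeff_pCons is_subring_0 split: nat.split)

lemma pCons_in_polys_over_iff: "pCons c p \<in> polys_over S \<longleftrightarrow> c \<in> S \<and> p \<in> polys_over S"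
  by (auto simp: polys_over_def coeff_pCons split: nat.split)

lemma monom_in_polys_over: "is_subring S \<Longrightarrow> c \<in> S \<Longrightarrow> monom c n \<in> polys_over S"
  by (auto simp: polys_over_def coeff_monom is_subring_0)

lemma smult_in_polys_over: "is_subring S \<Longrightarrow> c \<in> S \<Longrightarrow> p \<in> polys_over S \<Longrightarrow> smult c p \<in> polys_over S"
  by (auto simp: polys_over_def is_subring_mult)

lemma C2_in_polys_over: "is_subring S \<Longrightarrow> c \<in> S \<Longrightarrow> C2 c \<in> polys_over (polys_over S)"
  unfolding C2_def by (intro const_in_polys_over is_subring_polys_over)

lemma Xv_in_polys_over: "is_subring S \<Longrightarrow> Xv \<in> polys_over (polys_over S)"
  unfolding Xv_def
  by (auto simp: pCons_in_polys_over_iff is_subring_0 is_subring_1 const_in_polys_over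
      is_subring_polys_over intro: is_subring_0[OF is_subring_polys_over])

lemma Yv_in_polys_over: "is_subring S \<Longrightarrow> Yv \<in> polys_over (polys_over S)"
  unfolding Yv_def
  by (auto simp: pCons_in_polys_over_iff is_subring_0 is_subring_1 const_in_polys_over
      is_subring_polys_over intro: is_subring_0[OF is_subring_polys_over])

lemma emb2_in_polys_over: "range to_fract \<subseteq> S \<Longrightarrow> emb2 W \<in> polys_over (polys_over S)"
  by (auto simp: polys_over_def)

lemma subst2_in_polys_over:
  assumes S: "is_subring S" and "W \<in> polys_over (polys_over S)"
    and "U \<in> polys_over (polys_over S)" "V \<in> polys_over (polys_over S)"
  shows "subst2 W U V \<in> polys_over (polys_over S)"
proof (rule bivariate_induct_coeffs_in[where S = S and W = W])
  have SS: "is_subring (polys_over (polys_over S))"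
    using S by (intro is_subring_polys_over)
  show "\<forall>i j. coeff (coeff W i) j \<in> S"
    using assms by (simp add: polys_over_def)
  show "0 \<in> S"
    using S by (rule is_subring_0)
  show "subst2 (C2 c) U V \<in> polys_over (polys_over S)" if "c \<in> S" for c
    using C2_in_polys_over[OF S that] by simp
  show "subst2 Xv U V \<in> polys_over (polys_over S)" "subst2 Yv U V \<in> polys_over (polys_over S)"
    using assms by simp_all
  show "subst2 (A + B) U V \<in> polys_over (polys_over S)"
    if "subst2 A U V \<in> polys_over (polys_over S)" "subst2 B U V \<in> polys_over (polys_over S)" for A B
    using is_subring_add[OF SS that] by (simp only: subst2_add)
  show "subst2 (A * B) U V \<in> polys_over (polys_over S)"
    if "subst2 A U V \<in> polys_over (polys_over S)" "subst2 B U V \<in> polys_over (polys_over S)" for A B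
    using is_subring_mult[OF SS that] by (simp only: subst2_mult)
qed

lemma eval1_in_polys_over:
  assumes S: "is_subring S" and g: "g \<in> polys_over S" and U: "U \<in> polys_over (polys_over S)"
  shows "eval1 g U \<in> polys_over (polys_over S)"
  using g
proof (induct g)
  case 0
  then show ?case
    using S by (simp add: is_subring_0 is_subring_polys_over)
next
  case (pCons c g)
  have SS: "is_subring (polys_over (polys_over S))"
    using S by (intro is_subring_polys_over)
  show ?case
    using pCons U by (auto simp: pCons_in_polys_over_iff intro!: is_subring_add[OF SS]
        is_subring_mult[OF SS] C2_in_polys_over[OF S])
qed

lemma to_fract_power [simp]: "to_fract (x ^ n) = to_fract x ^ n"
  by (induct n) simp_all

lemma is_subring_Rloc:
  fixes b :: "'a::idom"
  assumes b: "b \<noteq> 0"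
  shows "is_subring (Rloc b)"
proof -
  let ?b = "to_fract b"
  have add: "to_fract r1 / ?b ^ n1 + to_fract r2 / ?b ^ n2
      = to_fract (r1 * b ^ n2 + r2 * b ^ n1) / ?b ^ (n1 + n2)" for r1 r2 n1 n2
    using b by (simp add: field_simps power_add)
  have mult: "(to_fract r1 / ?b ^ n1) * (to_fract r2 / ?b ^ n2) = to_fract (r1 * r2) / ?b ^ (n1 + n2)"
    for r1 r2 n1 n2
    using b by (simp add: field_simps power_add)
  have uminus: "- (to_fract r1 / ?b ^ n1) = to_fract (- r1) / ?b ^ n1" for r1 n1
    by simp
  have "to_fract r \<in> Rloc b" for r
    unfolding Rloc_def by (rule CollectI, rule exI[of _ r], rule exI[of _ 0]) simp
  then have "0 \<in> Rloc b" "1 \<in> Rloc b"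
    by (metis to_fract_0, metis to_fract_1)
  moreover have "x + y \<in> Rloc b" "x * y \<in> Rloc b" "- x \<in> Rloc b"
    if xy: "x \<in> Rloc b" "y \<in> Rloc b" for x y
  proof -
    obtain r1 n1 r2 n2 where x: "x = to_fract r1 / ?b ^ n1" and y: "y = to_fract r2 / ?b ^ n2"
      using xy unfolding Rloc_def by blast
    show "x + y \<in> Rloc b" "x * y \<in> Rloc b" "- x \<in> Rloc b"
      unfolding x y add mult uminus Rloc_def by blast+
  qed
  ultimately show ?thesis
    unfolding is_subring_def by simp
qed

lemma to_fract_in_Rloc: "to_fract r \<in> Rloc b"
  unfolding Rloc_def by (rule CollectI, rule exI[of _ r], rule exI[of _ 0]) simp

lemma inverse_in_Rloc: "inverse (to_fract b) \<in> Rloc b"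
  unfolding Rloc_def by (rule CollectI, rule exI[of _ 1], rule exI[of _ 1]) (simp add: field_simps)

lemma range_to_fract_subset_Rloc: "range to_fract \<subseteq> Rloc b"
  using to_fract_in_Rloc by blast

lemma map_poly_to_fract_in_polys_over_Rloc: "map_poly to_fract g \<in> polys_over (Rloc b)"
  by (simp add: polys_over_def coeff_map_poly to_fract_in_Rloc)

section \<open>Translation invariants in prime characteristic\<close>

lemma CHAR_fract [simp]: "CHAR('a::idom fract) = CHAR('a)"
  by (rule CHAR_eqI) (auto simp: of_nat_fract Fract_conv_to_fract of_nat_eq_0_iff_char_dvd)

lemma pcompose_power_left: "pcompose (r ^ k) q = pcompose r q ^ k"
  by (induct k) (simp_all add: pcompose_mult pcompose_1)

lemma pcompose_monom: "pcompose (monom c k) q = smult c (q ^ k)"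
  by (induct k) (simp_all add: monom_0 monom_Suc pcompose_pCons)

text \<open>The product of \<open>y - k c\<close> over \<open>k \<in> \<bbbF>\<^sub>p\<close>, which is invariant under \<open>y \<mapsto> y + c\<close>.\<close>
definition orbit_poly :: "nat \<Rightarrow> 'a::comm_ring_1 \<Rightarrow> 'a poly" where
  "orbit_poly p c = [:0, 1:] ^ p - [:0, c ^ (p - 1):]"

lemma pcompose_orbit_poly_translate:
  fixes c :: "'a::comm_ring_1"
  assumes p: "CHAR('a) = p" "prime p"
  shows "pcompose (orbit_poly p c) [:c, 1:] = orbit_poly p c"
proof -
  have "pcompose (orbit_poly p c) [:c, 1:] = [:c, 1:] ^ p - [:c ^ (p - 1):] * [:c, 1:]"
    by (simp add: orbit_poly_def pcompose_diff pcompose_power_left pcompose_pCons)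
  also have "[:c, 1:] ^ p = [:c:] ^ p + [:0, 1:] ^ p"
    using freshmans_dream[where x = "[:c:]" and y = "[:0, 1:]"] p by simp
  also have "[:c ^ (p - 1):] * [:c, 1:] = [:c ^ p:] + [:0, c ^ (p - 1):]"
  proof -
    have "c ^ (p - 1) * c = c ^ p"
      by (metis Suc_diff_1 prime_gt_0_nat p(2) power_Suc2)
    then show ?thesis
      by (simp add: mult.commute)
  qed
  finally show ?thesis
    by (simp add: orbit_poly_def poly_const_pow)
qed

lemma degree_orbit_poly: "p \<ge> 2 \<Longrightarrow> degree (orbit_poly p c) = p"
  unfolding orbit_poly_def diff_conv_add_uminus
  by (subst degree_add_eq_left) (auto simp: degree_linear_power)

lemma lead_coeff_orbit_poly: "p \<ge> 2 \<Longrightarrow> lead_coeff (orbit_poly p c) = 1"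
  by (simp add: degree_orbit_poly) (simp add: orbit_poly_def coeff_linear_power coeff_pCons split: nat.split)

lemma orbit_poly_in_polys_over: "is_subring S \<Longrightarrow> c \<in> S \<Longrightarrow> orbit_poly p c \<in> polys_over S"
  unfolding orbit_poly_def
  by (intro is_subring_diff[OF is_subring_polys_over] is_subring_power[OF is_subring_polys_over])
     (auto simp: pCons_in_polys_over_iff const_in_polys_over is_subring_0 is_subring_1 is_subring_power
       is_subring_0[OF is_subring_polys_over])

lemma coeff_pcompose_translate_top:
  fixes c :: "'a::idom"
  assumes "degree v \<le> n"
  shows "coeff (pcompose v [:c, 1:]) n = coeff v n"
proof (cases "degree v = n")
  case True
  then show ?thesis
    using lead_coeff_comp[of "[:c, 1:]" v] by (simp add: degree_pcompose)
next
  case False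
  then show ?thesis
    using assms by (simp add: coeff_eq_0 degree_pcompose)
qed

lemma coeff_pcompose_translate_below_top:
  fixes c :: "'a::idom"
  assumes "degree v \<le> Suc m"
  shows "coeff (pcompose v [:c, 1:]) m = coeff v m + of_nat (Suc m) * c * coeff v (Suc m)"
  using assms
proof (induct v arbitrary: m)
  case (pCons a v)
  have dv: "degree v \<le> m"
    using pCons(3) by (auto simp: degree_pCons_eq_if split: if_splits)
  show ?case
  proof (cases m)
    case 0
    then obtain v0 where "v = [:v0:]"
      using dv by (auto elim: degree_eq_zeroE)
    then show ?thesis
      using 0 by (simp add: pcompose_pCons)
  next
    case (Suc k)
    then show ?thesis
      using pCons(2)[of k] dv coeff_pcompose_translate_top[of v "Suc k" c]
      by (simp add: pcompose_pCons coeff_pCons algebra_simps)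
  qed
qed simp

lemma translation_invariant_degree_dvd:
  fixes c :: "'a::idom"
  assumes c: "c \<noteq> 0" and inv: "pcompose v [:c, 1:] = v"
  shows "CHAR('a) dvd degree v"
proof (cases "degree v")
  case (Suc m)
  then have "of_nat (degree v) * c * lead_coeff v = 0"
    using coeff_pcompose_translate_below_top[of v m c] inv by simp
  moreover have "v \<noteq> 0"
    using Suc by auto
  ultimately have "of_nat (degree v) = (0::'a)"
    using c by simp
  then show ?thesis
    by (simp add: of_nat_eq_0_iff_char_dvd)
qed simp

lemma translation_invariant_in_orbit_poly:
  fixes c :: "'a::idom"
  assumes p: "CHAR('a) = p" "p > 0" and c: "c \<noteq> 0" "c \<in> S" and S: "is_subring S"
  shows "pcompose v [:c, 1:] = v \<Longrightarrow> v \<in> polys_over S \<Longrightarrow> \<exists>w \<in> polys_over S. v = pcompose w (orbit_poly p c)"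
proof (induct "degree v" arbitrary: v rule: less_induct)
  case less
  show ?case
  proof (cases "degree v = 0")
    case True
    then show ?thesis
      using less by (intro bexI[of _ v]) (auto elim: degree_eq_zeroE)
  next
    case False
    have prime_p: "prime p"
      using p prime_CHAR_semidom[where 'a = 'a] by auto
    then have p2: "p \<ge> 2"
      by (rule prime_ge_2_nat)
    obtain k where k: "degree v = p * k"
      using translation_invariant_degree_dvd[OF c(1) less(2)] p by blast
    define l where "l = lead_coeff v"
    define v' where "v' = v - smult l (orbit_poly p c ^ k)"
    have SS: "is_subring (polys_over S)"
      using S by (rule is_subring_polys_over)
    have orbit: "degree (orbit_poly p c) = p" "lead_coeff (orbit_poly p c) = 1"
      using degree_orbit_poly[OF p2] lead_coeff_orbit_poly[OF p2] by blast+
    then have "orbit_poly p c \<noteq> 0"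
      by auto
    then have orbit_k: "degree (orbit_poly p c ^ k) = degree v" "lead_coeff (orbit_poly p c ^ k) = 1"
      using orbit k by (simp add: degree_power_eq, metis lead_coeff_power power_one)
    have "degree v' < degree v"
    proof (rule degree_lessI)
      show "v' \<noteq> 0 \<or> 0 < degree v" using False by simp
      show "\<forall>n\<ge>degree v. coeff v' n = 0"
      proof (intro allI impI)
        fix n
        assume "degree v \<le> n"
        then consider "n = degree v" | "degree v < n"
          by linarith
        then show "coeff v' n = 0"
          unfolding v'_def l_def using orbit_k by cases (simp_all add: coeff_eq_0)
      qed
    qed
    moreover have "pcompose v' [:c, 1:] = v'"
      unfolding v'_def using less(2) pcompose_orbit_poly_translate[OF p(1) prime_p]
      by (simp add: pcompose_diff pcompose_smult pcompose_power_left)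
    moreover have l: "l \<in> S"
      using less(3) unfolding l_def polys_over_def by simp
    then have "v' \<in> polys_over S"
      unfolding v'_def using less(3) c S
      by (intro is_subring_diff[OF SS] smult_in_polys_over is_subring_power[OF SS] orbit_poly_in_polys_over)
    ultimately obtain w' where w': "w' \<in> polys_over S" "v' = pcompose w' (orbit_poly p c)"
      using less(1) by blast
    have "v = pcompose (w' + monom l k) (orbit_poly p c)"
      using w'(2) unfolding v'_def by (simp add: pcompose_add pcompose_monom algebra_simps)
    moreover have "w' + monom l k \<in> polys_over S"
      using w'(1) l S by (intro is_subring_add[OF SS] monom_in_polys_over)
    ultimately show ?thesis
      by blast
  qed
qed

section \<open>Congruences and reduction modulo a prime of the base ring\<close>

lemma dvd_power_diff_power: "(M::'a::comm_ring_1) dvd A - B \<Longrightarrow> M dvd A ^ n - B ^ n"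
proof (induct n)
  case (Suc n)
  have "A ^ Suc n - B ^ Suc n = A * (A ^ n - B ^ n) + (A - B) * B ^ n"
    by (simp add: algebra_simps)
  then show ?case
    using Suc by (metis dvd_add dvd_mult dvd_mult2)
qed simp

lemma dvd_subst2_diff:
  fixes M :: "'a::comm_ring_1 poly poly"
  assumes "M dvd U - U'" "M dvd V - V'"
  shows "M dvd subst2 W U V - subst2 W U' V'"
proof (induct W rule: bivariate_induct)
  case (4 A B)
  have "subst2 (A + B) U V - subst2 (A + B) U' V'
      = (subst2 A U V - subst2 A U' V') + (subst2 B U V - subst2 B U' V')"
    by simp
  then show ?case
    using 4 by (metis dvd_add)
next
  case (5 A B)
  have "subst2 (A * B) U V - subst2 (A * B) U' V'
      = subst2 A U V * (subst2 B U V - subst2 B U' V') + (subst2 A U V - subst2 A U' V') * subst2 B U' V'"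
    by (simp add: algebra_simps)
  then show ?case
    using 5 by (metis dvd_add dvd_mult dvd_mult2)
qed (use assms in simp_all)

lemma dvd_eval1_diff:
  fixes M :: "'a::comm_ring_1 poly poly"
  assumes "M dvd U - U'"
  shows "M dvd eval1 g U - eval1 g U'"
proof (induct g)
  case (pCons c g)
  have "eval1 (pCons c g) U - eval1 (pCons c g) U' = U * (eval1 g U - eval1 g U') + (U - U') * eval1 g U'"
    by (simp add: algebra_simps)
  then show ?case
    using pCons assms by (metis dvd_add dvd_mult dvd_mult2)
qed simp

lemma eval1_taylor_2:
  fixes A H :: "'a::idom poly poly"
  shows "H ^ 2 dvd eval1 g (A + H) - eval1 g A - H * eval1 (pderiv g) A"
proof (induct g)
  case (pCons c g)
  have "H dvd eval1 g (A + H) - eval1 g A"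
    by (rule dvd_eval1_diff) simp
  then have "H ^ 2 dvd H * (eval1 g (A + H) - eval1 g A)"
    by (simp add: power2_eq_square)
  moreover have "eval1 (pCons c g) (A + H) - eval1 (pCons c g) A - H * eval1 (pderiv (pCons c g)) A
     = A * (eval1 g (A + H) - eval1 g A - H * eval1 (pderiv g) A) + H * (eval1 g (A + H) - eval1 g A)"
    by (simp add: pderiv_pCons eval1_add algebra_simps)
  ultimately show ?case
    using pCons by (metis dvd_add dvd_mult)
qed simp

definition in_y :: "'a::comm_ring_1 poly \<Rightarrow> 'a poly poly" where
  "in_y e = map_poly (\<lambda>r. [:r:]) e"

lemma is_ring_hom_in_y: "is_ring_hom in_y"
  unfolding in_y_def[abs_def] by (rule is_ring_hom_map_poly) (simp add: is_ring_hom_def)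

lemma in_y_const: "in_y [:r:] = C2 r"
  by (simp add: in_y_def C2_def)

lemma in_y_X: "in_y [:0, 1:] = Yv"
  by (simp add: in_y_def Yv_def map_poly_pCons pCons_one)

lemma eval1_in_y: "eval1 g (in_y e) = in_y (pcompose g e)"
  by (induct g)
     (simp_all add: pcompose_pCons is_ring_hom_0[OF is_ring_hom_in_y] is_ring_hom_add[OF is_ring_hom_in_y]
       is_ring_hom_mult[OF is_ring_hom_in_y] in_y_const)

lemma in_y_eq_eval1_Yv: "in_y g = eval1 g Yv"
  using eval1_in_y[of g "[:0, 1:]"] by (simp add: in_y_X)

lemma in_y_monom_1: "in_y (monom 1 n) = Yv ^ n"
  by (simp add: in_y_eq_eval1_Yv eval1_monom_1)

definition x_coeff :: "nat \<Rightarrow> 'a::comm_ring_1 poly poly \<Rightarrow> 'a poly" where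
  "x_coeff m W = map_poly (\<lambda>c. coeff c m) W"

definition x_degree_le :: "'a::comm_ring_1 poly poly \<Rightarrow> nat \<Rightarrow> bool" where
  "x_degree_le W k \<longleftrightarrow> (\<forall>m>k. x_coeff m W = 0)"

lemma coeff_x_coeff [simp]: "coeff (x_coeff m W) j = coeff (coeff W j) m"
  by (simp add: x_coeff_def coeff_map_poly)

lemma x_coeff_add: "x_coeff m (A + B) = x_coeff m A + x_coeff m B"
  by (rule poly_eqI) simp

lemma x_coeff_C2: "x_coeff m (C2 r) = (if m = 0 then [:r:] else 0)"
  by (rule poly_eqI) (auto simp: C2_def coeff_pCons split: nat.split)

lemma x_coeff_C2_mult: "x_coeff m (C2 r * W) = smult r (x_coeff m W)"
  by (rule poly_eqI) (simp add: C2_def)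

lemma x_coeff_Xv_mult: "x_coeff (Suc m) (Xv * W) = x_coeff m W"
  by (rule poly_eqI) (simp add: Xv_def)

lemma x_coeff_in_y_mult: "x_coeff m (in_y e * W) = e * x_coeff m W"
proof (induct e)
  case (pCons c e)
  have in_y: "in_y (pCons c e) = pCons [:c:] (in_y e)"
    by (simp add: in_y_def map_poly_pCons)
  have smult: "x_coeff m (smult [:c:] W) = smult c (x_coeff m W)"
    by (rule poly_eqI) simp
  have pCons_0: "x_coeff m (pCons 0 V) = pCons 0 (x_coeff m V)" for V
    by (rule poly_eqI) (simp add: coeff_pCons split: nat.split)
  show ?case
    unfolding in_y using pCons by (simp add: x_coeff_add smult pCons_0)
qed (simp add: in_y_def x_coeff_def)

lemma x_degree_leI:
  assumes "\<And>j. degree (coeff W j) \<le> k"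
  shows "x_degree_le W k"
  unfolding x_degree_le_def
proof (intro allI impI poly_eqI)
  fix m n
  assume "k < m"
  then have "degree (coeff W n) < m"
    using assms le_less_trans by blast
  then show "coeff (x_coeff m W) n = coeff 0 n"
    by (simp add: coeff_eq_0)
qed

lemma degree_coeff_le_if_x_degree_le: "x_degree_le W k \<Longrightarrow> degree (coeff W j) \<le> k"
  unfolding x_degree_le_def by (intro degree_le) (metis coeff_x_coeff coeff_0)

lemma x_coeff_eval1_linear:
  fixes b :: "'a::comm_ring_1" and e :: "'a poly"
  defines "U \<equiv> C2 b * Xv + in_y e"
  assumes "degree c \<le> n"
  shows "x_degree_le (eval1 c U) n \<and> x_coeff n (eval1 c U) = [:coeff c n * b ^ n:]"
  using assms(2)
proof (induct c arbitrary: n)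
  case (pCons r c)
  have e: "eval1 (pCons r c) U = C2 r + C2 b * (Xv * eval1 c U) + in_y e * eval1 c U"
    by (simp add: U_def algebra_simps)
  show ?case
  proof (cases n)
    case 0
    then have "c = 0"
      using pCons(3) by (auto simp: degree_pCons_eq_if split: if_splits)
    then show ?thesis
      using 0 by (simp add: eval1_def x_degree_le_def x_coeff_C2)
  next
    case (Suc n')
    have "degree c \<le> n'"
      using pCons(3) Suc by (auto simp: degree_pCons_eq_if split: if_splits)
    note ih = pCons(2)[OF this]
    have "x_coeff m (eval1 (pCons r c) U) = 0" if m: "n < m" for m
    proof -
      obtain m' where "m = Suc m'" "n' < m'"
        using m Suc by (cases m) auto
      then show ?thesis
        using ih m Suc unfolding e x_degree_le_def
        by (simp add: x_coeff_add x_coeff_C2 x_coeff_C2_mult x_coeff_Xv_mult x_coeff_in_y_mult)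
    qed
    moreover have "x_coeff n (eval1 (pCons r c) U) = [:coeff (pCons r c) n * b ^ n:]"
      using ih Suc unfolding e x_degree_le_def
      by (simp add: x_coeff_add x_coeff_C2 x_coeff_C2_mult x_coeff_Xv_mult x_coeff_in_y_mult algebra_simps)
    ultimately show ?thesis
      by (simp add: x_degree_le_def)
  qed
qed (simp add: x_degree_le_def x_coeff_def)

lemma x_coeff_subst2_linear_top:
  fixes b :: "'a::comm_ring_1" and e :: "'a poly"
  defines "U \<equiv> C2 b * Xv + in_y e"
  assumes "x_degree_le W m"
  shows "x_coeff m (subst2 W U (in_y v)) = smult (b ^ m) (pcompose (x_coeff m W) v)"
  using assms(2)
proof (induct W)
  case (pCons c W)
  have "x_degree_le W m"
    using pCons(3) unfolding x_degree_le_def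
    by (metis (no_types, lifting) coeff_x_coeff coeff_pCons_Suc poly_eqI coeff_0)
  moreover have "degree c \<le> m"
    using degree_coeff_le_if_x_degree_le[OF pCons(3), of 0] by simp
  moreover have "subst2 (pCons c W) U (in_y v) = eval1 c U + in_y v * subst2 W U (in_y v)"
    by (simp add: subst2_def eval1_def map_poly_pCons)
  moreover have "x_coeff m (pCons c W) = pCons (coeff c m) (x_coeff m W)"
    by (rule poly_eqI) (simp add: coeff_pCons split: nat.split)
  ultimately show ?case
    using x_coeff_eval1_linear[of c m b e] pCons(2)
    by (simp add: U_def x_coeff_add x_coeff_in_y_mult pcompose_pCons smult_add_right mult.commute)
qed (simp add: subst2_def x_coeff_def)

lemma coeff_pcompose_monom_1:
  fixes g :: "'a::comm_ring_1 poly"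
  assumes p: "p > 0"
  shows "coeff (pcompose g (monom 1 p)) k = (if p dvd k then coeff g (k div p) else 0)"
proof (induct g arbitrary: k)
  case (pCons a g)
  have "coeff (pcompose (pCons a g) (monom 1 p)) k
      = (if k = 0 then a else 0) + (if k < p then 0 else coeff (pcompose g (monom 1 p)) (k - p))"
    by (simp add: pcompose_pCons coeff_monom_mult coeff_pCons split: nat.split)
  also have "\<dots> = (if p dvd k then coeff (pCons a g) (k div p) else 0)"
  proof (cases "k < p")
    case True
    then show ?thesis
      using p by (auto simp: dvd_imp_le)
  next
    case False
    then have kp: "k - p + p = k"
      by simp
    have "p dvd (k - p) \<longleftrightarrow> p dvd k"
      by (metis dvd_add_triv_right_iff kp)
    moreover have "p dvd k \<Longrightarrow> k div p = Suc ((k - p) div p)"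
      using False p by (metis Suc_eq_plus1 add.commute div_add_self2 kp nat_neq_iff)
    ultimately show ?thesis
      using pCons False p by auto
  qed
  finally show ?case .
qed simp

text \<open>The top \<open>x\<close>-coefficient of the image is \<open>b\<^sup>m\<close> times that of \<open>W\<close> with \<open>y\<close> replaced by \<open>y\<^sup>p\<close>.\<close>
lemma subst2_linear_pth_power_not_dvd:
  fixes \<pi> b :: "'a::idom"
  assumes \<pi>: "prime_elem \<pi>" "\<not> \<pi> dvd b" and p: "p > 0" and W: "W \<noteq> 0"
    and reduced: "\<And>i j. \<pi> dvd coeff (coeff W i) j \<Longrightarrow> coeff (coeff W i) j = 0"
  shows "\<not> C2 \<pi> dvd subst2 W (C2 b * Xv + in_y e) (in_y (monom 1 p))"
proof
  assume dvd: "C2 \<pi> dvd subst2 W (C2 b * Xv + in_y e) (in_y (monom 1 p))"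
  define J where "J = {j. coeff W j \<noteq> 0}"
  define m where "m = Max ((\<lambda>j. degree (coeff W j)) ` J)"
  have "finite J"
    unfolding J_def by (rule finite_subset[of _ "{..degree W}"]) (auto intro: le_degree)
  moreover have "degree W \<in> J"
    using W unfolding J_def by simp
  ultimately have "m \<in> (\<lambda>j. degree (coeff W j)) ` J" and max: "\<And>j. j \<in> J \<Longrightarrow> degree (coeff W j) \<le> m"
    unfolding m_def by (auto intro: Max_in Max_ge)
  then obtain j0 where j0: "j0 \<in> J" and m: "m = degree (coeff W j0)"
    by blast
  have "x_degree_le W m"
  proof (rule x_degree_leI)
    show "degree (coeff W j) \<le> m" for j
      using max[of j] unfolding J_def by (cases "coeff W j = 0") auto
  qed
  then have "coeff (x_coeff m (subst2 W (C2 b * Xv + in_y e) (in_y (monom 1 p)))) (p * j0)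
      = b ^ m * lead_coeff (coeff W j0)"
    using x_coeff_subst2_linear_top[of W m b e "monom 1 p"] p by (simp add: coeff_pcompose_monom_1 m)
  moreover have "\<pi> dvd coeff (x_coeff m (subst2 W (C2 b * Xv + in_y e) (in_y (monom 1 p)))) (p * j0)"
    using dvd unfolding C2_dvd_iff by simp
  ultimately have "\<pi> dvd b ^ m \<or> \<pi> dvd lead_coeff (coeff W j0)"
    using \<pi> by (simp add: prime_elem_dvd_mult_iff)
  moreover have "lead_coeff (coeff W j0) \<noteq> 0"
    using j0 unfolding J_def by simp
  ultimately show False
    using \<pi> reduced prime_elem_dvd_power by blast
qed

lemma C2_prime_dvd_subst2_linear_pth_power:
  fixes \<pi> b :: "'a::idom" and P :: "'a poly poly"
  assumes \<pi>: "prime_elem \<pi>" "\<not> \<pi> dvd b" and p: "p > 0"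
    and dvd: "C2 \<pi> dvd subst2 P (C2 b * Xv + in_y e) (in_y (monom 1 p))"
  shows "C2 \<pi> dvd P"
proof -
  let ?U = "C2 b * Xv + in_y e" and ?V = "in_y (monom 1 p)"
  define red where "red r = (if \<pi> dvd r then 0 else r)" for r
  define W where "W = map_poly (map_poly red) P"
  have coeff_W: "coeff (coeff W i) j = red (coeff (coeff P i) j)" for i j
    by (simp add: W_def coeff_map_poly red_def)
  have "C2 \<pi> dvd P - W"
    unfolding C2_dvd_iff by (simp add: coeff_W red_def)
  then obtain Z where Z: "P - W = C2 \<pi> * Z"
    by (elim dvdE)
  then have "subst2 W ?U ?V = subst2 P ?U ?V - C2 \<pi> * subst2 Z ?U ?V"
    using arg_cong[OF Z, of "\<lambda>W. subst2 W ?U ?V"] by (simp add: algebra_simps)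
  then have "C2 \<pi> dvd subst2 W ?U ?V"
    using dvd by (simp add: dvd_diff)
  moreover have "\<pi> dvd coeff (coeff W i) j \<Longrightarrow> coeff (coeff W i) j = 0" for i j
    by (simp add: coeff_W red_def split: if_splits)
  ultimately have "W = 0"
    using subst2_linear_pth_power_not_dvd[OF \<pi> p] by blast
  then show ?thesis
    using Z by (metis diff_zero dvd_triv_left)
qed

section \<open>Clearing denominators\<close>

lemma common_denominator_Rloc:
  fixes a :: "'a::idom"
  assumes a: "a \<noteq> 0" and W: "W \<in> polys_over (polys_over (Rloc a))"
  shows "\<exists>N W0. W = emb2 W0 * C2 (inverse (to_fract a) ^ N)"
proof (rule bivariate_induct_coeffs_in[where S = "Rloc a" and W = W])
  let ?i = "inverse (to_fract a)"
  show "\<forall>i j. coeff (coeff W i) j \<in> Rloc a"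
    using W by (simp add: polys_over_def)
  show "0 \<in> Rloc a"
    using is_subring_Rloc[OF a] by (rule is_subring_0)
  show "\<exists>N W0. C2 c = emb2 W0 * C2 (?i ^ N)" if c: "c \<in> Rloc a" for c
  proof -
    obtain r n where "c = to_fract r / to_fract a ^ n"
      using c unfolding Rloc_def by blast
    then have "C2 c = emb2 (C2 r) * C2 (?i ^ n)"
      by (simp add: C2_mult[symmetric] field_simps power_inverse)
    then show ?thesis
      by blast
  qed
  show "\<exists>N W0. Xv = emb2 W0 * C2 (?i ^ N)" "\<exists>N W0. Yv = emb2 W0 * C2 (?i ^ N)"
    by (metis emb2_Xv emb2_Yv power_0 C2_1 mult_1_right)+
  show "\<exists>N W0. A + B = emb2 W0 * C2 (?i ^ N)"
    if AB: "\<exists>N W0. A = emb2 W0 * C2 (?i ^ N)" "\<exists>N W0. B = emb2 W0 * C2 (?i ^ N)" for A B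
  proof -
    obtain N1 A0 N2 B0 where A: "A = emb2 A0 * C2 (?i ^ N1)" and B: "B = emb2 B0 * C2 (?i ^ N2)"
      using AB by blast
    have "to_fract a ^ N2 * ?i ^ (N1 + N2) = ?i ^ N1" "to_fract a ^ N1 * ?i ^ (N1 + N2) = ?i ^ N2"
      using a by (simp_all add: power_add field_simps)
    then have "A + B = emb2 (A0 * C2 (a ^ N2) + B0 * C2 (a ^ N1)) * C2 (?i ^ (N1 + N2))"
      unfolding A B by (simp add: algebra_simps C2_mult[symmetric] mult.assoc[symmetric])
    then show ?thesis
      by blast
  qed
  show "\<exists>N W0. A * B = emb2 W0 * C2 (?i ^ N)"
    if AB: "\<exists>N W0. A = emb2 W0 * C2 (?i ^ N)" "\<exists>N W0. B = emb2 W0 * C2 (?i ^ N)" for A B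
  proof -
    obtain N1 A0 N2 B0 where A: "A = emb2 A0 * C2 (?i ^ N1)" and B: "B = emb2 B0 * C2 (?i ^ N2)"
      using AB by blast
    have "A * B = emb2 (A0 * B0) * C2 (?i ^ (N1 + N2))"
      unfolding A B by (simp add: power_add C2_mult algebra_simps)
    then show ?thesis
      by blast
  qed
qed

text \<open>Induction on the prime factors of \<open>D\<close>: those dividing \<open>b\<close> stay in the denominator, the others
  are cancelled against the numerator by \<open>inj\<close>.\<close>
lemma cancel_denominator_primes:
  fixes a b :: "'a::factorial_ring_gcd" and U V :: "'a poly poly"
  assumes inj: "\<And>\<pi> W. prime \<pi> \<Longrightarrow> \<pi> dvd a \<Longrightarrow> \<not> \<pi> dvd b \<Longrightarrow> C2 \<pi> dvd subst2 W U V \<Longrightarrow> C2 \<pi> dvd W"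
  shows "D \<noteq> 0 \<Longrightarrow> (\<forall>\<pi>. prime \<pi> \<longrightarrow> \<pi> dvd D \<longrightarrow> \<pi> dvd a) \<Longrightarrow> C2 D * u = subst2 W U V \<Longrightarrow>
    \<exists>D' W' k. D' \<noteq> 0 \<and> D' dvd b ^ k \<and>
      emb2 W * C2 (inverse (to_fract D)) = emb2 W' * C2 (inverse (to_fract D'))"
proof (induct D arbitrary: u W rule: prime_divisors_induct)
  case (unit x)
  then show ?case
    by (intro exI[of _ x] exI[of _ W] exI[of _ 0]) auto
next
  case (factor q x)
  have x: "x \<noteq> 0" "\<forall>\<pi>. prime \<pi> \<longrightarrow> \<pi> dvd x \<longrightarrow> \<pi> dvd a"
    using factor(3,4) by auto
  have q: "q \<noteq> 0"
    using factor(1) by auto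
  show ?case
  proof (cases "q dvd b")
    case True
    have "C2 x * (C2 q * u) = subst2 W U V"
      using factor(5) by (simp add: C2_mult algebra_simps)
    then obtain D' W' k where IH: "D' \<noteq> 0" "D' dvd b ^ k"
      "emb2 W * C2 (inverse (to_fract x)) = emb2 W' * C2 (inverse (to_fract D'))"
      using factor(2)[OF x] by blast
    have "emb2 W * C2 (inverse (to_fract (q * x))) = (emb2 W * C2 (inverse (to_fract x))) * C2 (inverse (to_fract q))"
      by (simp add: C2_mult algebra_simps)
    also have "\<dots> = emb2 W' * C2 (inverse (to_fract (q * D')))"
      unfolding IH(3) by (simp add: C2_mult algebra_simps)
    finally show ?thesis
      using IH q True by (intro exI[of _ "q * D'"] exI[of _ W'] exI[of _ "Suc k"]) (auto simp: mult_dvd_mono)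
  next
    case False
    have "C2 q dvd subst2 W U V"
      using factor(5)[symmetric] by (simp add: C2_mult algebra_simps)
    moreover have "q dvd a"
      using factor(1,4) by auto
    ultimately obtain W0 where W0: "W = C2 q * W0"
      using inj[OF factor(1) _ False] by (blast elim: dvdE)
    have "C2 q * (C2 x * u) = C2 q * subst2 W0 U V"
      using factor(5) unfolding W0 by (simp add: C2_mult algebra_simps)
    then have "C2 x * u = subst2 W0 U V"
      using q by simp
    then obtain D' W' k where IH: "D' \<noteq> 0" "D' dvd b ^ k"
      "emb2 W0 * C2 (inverse (to_fract x)) = emb2 W' * C2 (inverse (to_fract D'))"
      using factor(2)[OF x] by blast
    have "emb2 W * C2 (inverse (to_fract (q * x)))
        = (emb2 W0 * C2 (inverse (to_fract x))) * (C2 (to_fract q) * C2 (inverse (to_fract q)))"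
      unfolding W0 by (simp add: C2_mult algebra_simps)
    also have "\<dots> = emb2 W' * C2 (inverse (to_fract D'))"
      unfolding IH(3) using q by (simp add: C2_inverse_cancel)
    finally show ?thesis
      using IH by blast
  qed
qed simp

lemma emb2_div_in_polys_over_Rloc:
  fixes b D :: "'a::idom"
  assumes b: "b \<noteq> 0" and D: "D \<noteq> 0" "D dvd b ^ k"
  shows "emb2 W * C2 (inverse (to_fract D)) \<in> polys_over (polys_over (Rloc b))"
proof -
  obtain t where t: "b ^ k = D * t"
    using D by blast
  with b have "t \<noteq> 0"
    by auto
  with t have "inverse (to_fract D) = to_fract t / to_fract b ^ k"
    using b D by (simp flip: to_fract_power add: field_simps)
  then have "inverse (to_fract D) \<in> Rloc b"
    unfolding Rloc_def by blast
  then show ?thesis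
    using is_subring_Rloc[OF b] emb2_in_polys_over[OF range_to_fract_subset_Rloc]
    by (intro is_subring_mult[OF is_subring_polys_over[OF is_subring_polys_over]] C2_in_polys_over)
qed

lemma subst2_preimage_in_polys_over_Rloc:
  fixes a b :: "'a::factorial_ring_gcd" and U V :: "'a poly poly"
  assumes a: "a \<noteq> 0" and b: "b \<noteq> 0"
    and inj: "\<And>\<pi> W. prime \<pi> \<Longrightarrow> \<pi> dvd a \<Longrightarrow> \<not> \<pi> dvd b \<Longrightarrow> C2 \<pi> dvd subst2 W U V \<Longrightarrow> C2 \<pi> dvd W"
    and P: "P \<in> polys_over (polys_over (Rloc a))" and u: "emb2 u = subst2 P (emb2 U) (emb2 V)"
  shows "P \<in> polys_over (polys_over (Rloc b))"
proof -
  obtain N W where W: "P = emb2 W * C2 (inverse (to_fract a) ^ N)"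
    using common_denominator_Rloc[OF a P] by blast
  have "emb2 u = emb2 (subst2 W U V) * C2 (inverse (to_fract a) ^ N)"
    using u unfolding W by (simp add: emb2_subst2)
  then have "emb2 (C2 (a ^ N) * u) = (C2 (to_fract a ^ N) * C2 (inverse (to_fract a) ^ N)) * emb2 (subst2 W U V)"
    by (simp add: algebra_simps)
  also have "C2 (to_fract a ^ N) * C2 (inverse (to_fract a) ^ N) = 1"
    using a by (simp add: C2_inverse_cancel power_inverse)
  finally have "C2 (a ^ N) * u = subst2 W U V"
    by (simp add: emb2_inject)
  moreover have "a ^ N \<noteq> 0" "\<forall>\<pi>. prime \<pi> \<longrightarrow> \<pi> dvd a ^ N \<longrightarrow> \<pi> dvd a"
    using a prime_dvd_power by auto
  ultimately obtain D W' k where "D \<noteq> 0" "D dvd b ^ k"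
    "emb2 W * C2 (inverse (to_fract (a ^ N))) = emb2 W' * C2 (inverse (to_fract D))"
    using cancel_denominator_primes[OF inj] by blast
  then show ?thesis
    using W emb2_div_in_polys_over_Rloc[OF b] by (simp add: power_inverse)
qed

section \<open>The \<open>p\<close>-th power part of \<open>\<theta>\<close>\<close>

lemma dvd_of_nat_mult_cancel:
  fixes x c :: "'a::comm_ring_1"
  assumes "CHAR('a) = p" "prime p" "\<not> p dvd k" and "c dvd of_nat k * x"
  shows "c dvd x"
proof -
  have "coprime p k"
    using assms(2,3) by (rule prime_imp_coprime)
  then have "coprime (int k) (int p)"
    by (simp add: coprime_commute)
  then obtain u v where "u * int k + v * int p = 1"
    using bezout_int[of "int k" "int p"] by auto
  then have "of_int (u * int k + v * int p) = (1::'a)"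
    by simp
  then have "of_int u * of_nat k = (1::'a)"
    using assms(1) of_nat_CHAR[where 'a = 'a] by simp
  then have "x = of_int u * (of_nat k * x)"
    by (simp flip: mult.assoc)
  then show ?thesis
    using assms(4) by (metis dvd_mult)
qed

lemma coeff_theta_star: "coeff (theta_star p \<theta>) j = (if j \<in> {1..degree \<theta>} then coeff \<theta> (p * j) else 0)"
  by (simp add: theta_star_def coeff_sum coeff_monom)

lemma theta_star_decomp:
  fixes \<theta> :: "'a::idom poly"
  assumes p: "p > 0" and \<theta>0: "coeff \<theta> 0 = 0" and d: "\<And>k. \<not> p dvd k \<Longrightarrow> d dvd coeff \<theta> k"
  obtains \<theta>1 where "\<theta> = pcompose (theta_star p \<theta>) (monom 1 p) + smult d \<theta>1"
proof -
  have "d dvd coeff (\<theta> - pcompose (theta_star p \<theta>) (monom 1 p)) k" for k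
  proof (cases "p dvd k")
    case True
    then obtain j where k: "k = p * j"
      by blast
    have "coeff (theta_star p \<theta>) j = coeff \<theta> k"
    proof (cases "j = 0 \<or> j \<le> degree \<theta>")
      case False
      moreover have "j \<le> p * j"
        using p by simp
      ultimately have "degree \<theta> < k"
        using k by linarith
      then show ?thesis
        using False by (simp add: coeff_theta_star coeff_eq_0)
    qed (use k \<theta>0 in \<open>auto simp: coeff_theta_star Suc_le_eq\<close>)
    then show ?thesis
      using p k by (simp add: coeff_pcompose_monom_1)
  next
    case False
    then show ?thesis
      using p d by (simp add: coeff_pcompose_monom_1)
  qed
  then have "[:d:] dvd \<theta> - pcompose (theta_star p \<theta>) (monom 1 p)"
    unfolding const_poly_dvd_iff by blast
  then obtain \<theta>1 where "\<theta> - pcompose (theta_star p \<theta>) (monom 1 p) = [:d:] * \<theta>1"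
    by (elim dvdE)
  then show ?thesis
    by (intro that[of \<theta>1]) (simp add: algebra_simps)
qed

section \<open>The invariants of \<open>\<phi>\<close>\<close>

locale char_p_automorphism =
  fixes a d :: "'a::factorial_ring_gcd" and \<theta> G :: "'a poly" and p :: nat
    and f F q :: "'a poly poly" and phiX q1 :: "'a fract poly poly"
    and phi :: "'a fract poly poly \<Rightarrow> 'a fract poly poly"
  assumes charp: "CHAR('a) = p" and p_pos: "p > 0"
    and a_nz: "a \<noteq> 0" and theta_y: "coeff \<theta> 0 = 0"
    and f_def: "f = C2 a * Xv + eval1 \<theta> Yv"
    and F_def: "F = eval1 G f" and F_nz: "F \<noteq> 0"
    and phiX_def: "phiX = emb2 Xv + C2 (inverse (to_fract a)) *
          (eval1 (map_poly to_fract \<theta>) (emb2 Yv)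
           - eval1 (map_poly to_fract \<theta>) (emb2 (Yv + C2 a * F)))"
    and phi_def: "phi = (\<lambda>u. subst2 u phiX (emb2 (Yv + C2 a * F)))"
    and d_dvd_a: "[:d:] dvd [:a:]" and d_dvd_theta': "[:d:] dvd pderiv \<theta>"
    and q_def: "q = Yv ^ p - (C2 a * F) ^ (p - 1) * Yv"
    and q1_def: "q1 = C2 (inverse (to_fract d)) *
          (emb2 f - eval1 (map_poly to_fract (theta_star p \<theta>)) (emb2 q))"
begin

definition b :: 'a where
  "b = a div d"

lemma prime_p: "prime p"
  using prime_CHAR_semidom[where 'a = 'a] charp p_pos by simp

lemma p_ge_2: "p \<ge> 2"
  using prime_p by (rule prime_ge_2_nat)

lemma d_dvd: "d dvd a"
  using d_dvd_a by (simp add: const_poly_dvd_iff) (metis coeff_pCons_0)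

lemma d_nz: "d \<noteq> 0"
  using d_dvd a_nz by auto

lemma d_mult_b: "d * b = a"
  unfolding b_def using d_dvd by simp

lemma b_nz: "b \<noteq> 0"
  using d_mult_b a_nz by auto

lemma emb2_f: "emb2 f = C2 (to_fract a) * Xv + eval1 (map_poly to_fract \<theta>) Yv"
  by (simp add: f_def)

lemma emb2_F: "emb2 F = eval1 (map_poly to_fract G) (emb2 f)"
  by (simp add: F_def)

lemma emb2_q: "emb2 q = Yv ^ p - (C2 (to_fract a) * emb2 F) ^ (p - 1) * Yv"
  by (simp add: q_def)

lemma freshmans_dream_fract: "(A + B) ^ p = A ^ p + B ^ p" for A B :: "'a fract poly poly"
  using prime_p charp by (intro freshmans_dream) simp_all

lemma is_ring_hom_phi: "is_ring_hom phi"
  unfolding phi_def by (rule is_ring_hom_subst2)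

lemma phi_C2 [simp]: "phi (C2 c) = C2 c"
  by (simp add: phi_def)

lemma phi_eval1: "phi (eval1 g U) = eval1 g (phi U)"
  by (rule ring_hom_eval1[OF is_ring_hom_phi phi_C2])

lemma phi_f: "phi (emb2 f) = emb2 f"
proof -
  have "phi (emb2 f) = C2 (to_fract a) * phiX + eval1 (map_poly to_fract \<theta>) (emb2 (Yv + C2 a * F))"
    by (simp add: phi_def f_def)
  then show ?thesis
    unfolding phiX_def emb2_f using a_nz by (simp add: algebra_simps C2_inverse_cancel flip: mult.assoc)
qed

lemma phi_F: "phi (emb2 F) = emb2 F"
  unfolding emb2_F phi_eval1 phi_f ..

lemma phi_q: "phi (emb2 q) = emb2 q"
proof -
  let ?c = "C2 (to_fract a) * emb2 F"
  have "phi Yv = Yv + ?c"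
    by (simp add: phi_def)
  then have "phi (emb2 q) = (Yv + ?c) ^ p - ?c ^ (p - 1) * (Yv + ?c)"
    unfolding emb2_q
    by (simp add: is_ring_hom_diff[OF is_ring_hom_phi] is_ring_hom_mult[OF is_ring_hom_phi]
        is_ring_hom_power[OF is_ring_hom_phi] phi_F)
  also have "\<dots> = Yv ^ p + ?c ^ p - ?c ^ (p - 1) * Yv - ?c ^ (p - 1) * ?c"
    by (simp add: freshmans_dream_fract algebra_simps)
  also have "?c ^ (p - 1) * ?c = ?c ^ p"
    using p_pos by (metis Suc_diff_1 power_Suc2)
  finally show ?thesis
    unfolding emb2_q by simp
qed

lemma phi_q1: "phi q1 = q1"
  unfolding q1_def
  by (simp add: is_ring_hom_mult[OF is_ring_hom_phi] is_ring_hom_diff[OF is_ring_hom_phi] phi_eval1 phi_f phi_q)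

lemma phi_subst2_q1_q: "phi (subst2 P q1 (emb2 q)) = subst2 P q1 (emb2 q)"
  unfolding phi_def subst2_subst2 using phi_q1 phi_q by (simp add: phi_def)

definition straighten :: "'a fract poly poly \<Rightarrow> 'a fract poly poly" where
  "straighten W = subst2 W (C2 (inverse (to_fract a)) * (Xv - eval1 (map_poly to_fract \<theta>) Yv)) Yv"

definition shift :: "'a fract poly" where
  "shift = smult (to_fract a) (map_poly to_fract G)"

lemma straighten_f: "straighten (emb2 f) = Xv"
  unfolding straighten_def emb2_f using a_nz by (simp add: algebra_simps C2_inverse_cancel flip: mult.assoc)

lemma subst2_straighten_f: "subst2 (straighten W) (emb2 f) Yv = W"
proof -
  have "C2 (inverse (to_fract a)) * (emb2 f - eval1 (map_poly to_fract \<theta>) Yv) = Xv"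
    unfolding emb2_f using a_nz by (simp add: algebra_simps C2_inverse_cancel flip: mult.assoc)
  then show ?thesis
    unfolding straighten_def subst2_subst2 by (simp add: subst2_Xv_Yv)
qed

lemma straighten_phi: "straighten (phi W) = pcompose (straighten W) [:shift, 1:]"
proof -
  let ?A = "C2 (inverse (to_fract a)) * (Xv - eval1 (map_poly to_fract \<theta>) Yv)"
  let ?Y = "Yv + C2 (to_fract a) * eval1 (map_poly to_fract G) Xv"
  have Y: "subst2 (emb2 (Yv + C2 a * F)) ?A Yv = ?Y"
    by (simp add: emb2_F straighten_f[unfolded straighten_def])
  have X: "subst2 phiX ?A Yv = C2 (inverse (to_fract a)) * (Xv - eval1 (map_poly to_fract \<theta>) ?Y)"
  proof -
    have "subst2 phiX ?A Yv = ?A + C2 (inverse (to_fract a)) * (eval1 (map_poly to_fract \<theta>) Yv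
        - eval1 (map_poly to_fract \<theta>) (subst2 (emb2 (Yv + C2 a * F)) ?A Yv))"
      unfolding phiX_def by (simp del: emb2_add emb2_mult)
    then show ?thesis
      unfolding Y by (simp add: algebra_simps)
  qed
  have "?Y = [:shift, 1:]"
    by (simp add: shift_def eval1_Xv C2_def Yv_def)
  then have "straighten (phi W) = subst2 (straighten W) Xv [:shift, 1:]"
    unfolding straighten_def phi_def subst2_subst2 X Y by (simp add: subst2_subst2)
  then show ?thesis
    by (simp add: subst2_Xv_eq_pcompose)
qed

lemma shift_nz: "shift \<noteq> 0"
  using F_nz a_nz unfolding shift_def F_def by (auto simp: map_poly_eq_0_iff)

lemma shift_in_polys_over: "shift \<in> polys_over (Rloc a)"
  unfolding shift_def using map_poly_to_fract_in_polys_over_Rloc[of "smult a G" a] by simp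

lemma subst2_orbit_poly_f: "subst2 (orbit_poly p shift) (emb2 f) Yv = emb2 q"
proof -
  have "C2 (to_fract a) * eval1 (map_poly to_fract G) Xv = [:shift:]"
    unfolding shift_def by (simp add: eval1_Xv C2_def)
  moreover have "[:0, shift ^ (p - 1):] = [:shift:] ^ (p - 1) * [:0, 1:]"
    by (simp add: poly_const_pow)
  ultimately have "orbit_poly p shift = Yv ^ p - (C2 (to_fract a) * eval1 (map_poly to_fract G) Xv) ^ (p - 1) * Yv"
    unfolding orbit_poly_def Yv_def by simp
  then show ?thesis
    unfolding emb2_q emb2_F by simp
qed

lemma f_eq_q1: "emb2 f = C2 (to_fract d) * q1 + eval1 (map_poly to_fract (theta_star p \<theta>)) (emb2 q)"
  unfolding q1_def using d_nz by (simp add: C2_inverse_cancel flip: mult.assoc)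

lemma is_subring_bivariate_Rloc_a: "is_subring (polys_over (polys_over (Rloc a)))"
  using a_nz by (intro is_subring_polys_over is_subring_Rloc)

lemma straighten_in_polys_over: "straighten (emb2 u) \<in> polys_over (polys_over (Rloc a))"
  unfolding straighten_def using a_nz
  by (intro subst2_in_polys_over is_subring_Rloc emb2_in_polys_over range_to_fract_subset_Rloc
      is_subring_mult[OF is_subring_bivariate_Rloc_a] is_subring_diff[OF is_subring_bivariate_Rloc_a]
      C2_in_polys_over inverse_in_Rloc Xv_in_polys_over Yv_in_polys_over eval1_in_polys_over
      map_poly_to_fract_in_polys_over_Rloc)

lemma invariant_in_Rloc_f_q:
  assumes u: "u \<in> Rxy" and inv: "phi u = u"
  shows "\<exists>w \<in> polys_over (polys_over (Rloc a)). u = subst2 w (emb2 f) (emb2 q)"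
proof -
  have "pcompose (straighten u) [:shift, 1:] = straighten u"
    using straighten_phi[of u] inv by simp
  moreover have "straighten u \<in> polys_over (polys_over (Rloc a))"
    using u straighten_in_polys_over unfolding Rxy_def by blast
  ultimately obtain w where w: "w \<in> polys_over (polys_over (Rloc a))"
    "straighten u = pcompose w (orbit_poly p shift)"
    using translation_invariant_in_orbit_poly[OF _ p_pos shift_nz shift_in_polys_over] charp
      is_subring_polys_over[OF is_subring_Rloc[OF a_nz]] by auto
  have "u = subst2 (straighten u) (emb2 f) Yv"
    by (simp add: subst2_straighten_f)
  also have "\<dots> = subst2 w (emb2 f) (emb2 q)"
    unfolding w(2) subst2_Xv_eq_pcompose[symmetric] subst2_subst2 subst2_orbit_poly_f by simp
  finally show ?thesis
    using w(1) by blast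
qed

lemma invariant_in_Rloc_q1_q:
  assumes "u \<in> Rxy" and "phi u = u"
  shows "\<exists>P \<in> polys_over (polys_over (Rloc a)). u = subst2 P q1 (emb2 q)"
proof -
  let ?f = "C2 (to_fract d) * Xv + eval1 (map_poly to_fract (theta_star p \<theta>)) Yv"
  obtain w where w: "w \<in> polys_over (polys_over (Rloc a))" "u = subst2 w (emb2 f) (emb2 q)"
    using invariant_in_Rloc_f_q[OF assms] by blast
  then have "u = subst2 (subst2 w ?f Yv) q1 (emb2 q)"
    unfolding subst2_subst2 by (simp add: f_eq_q1)
  moreover have "subst2 w ?f Yv \<in> polys_over (polys_over (Rloc a))"
    using w(1) a_nz
    by (intro subst2_in_polys_over is_subring_Rloc is_subring_add[OF is_subring_bivariate_Rloc_a]
        is_subring_mult[OF is_subring_bivariate_Rloc_a] C2_in_polys_over to_fract_in_Rloc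
        Xv_in_polys_over Yv_in_polys_over eval1_in_polys_over map_poly_to_fract_in_polys_over_Rloc)
  ultimately show ?thesis
    by blast
qed


lemma d_dvd_coeff_theta:
  assumes "\<not> p dvd k"
  shows "d dvd coeff \<theta> k"
proof -
  obtain k' where k: "k = Suc k'"
    using assms by (cases k) auto
  have "d dvd coeff (pderiv \<theta>) k'"
    using d_dvd_theta' by (simp add: const_poly_dvd_iff)
  then have "d dvd of_nat k * coeff \<theta> k"
    by (simp add: coeff_pderiv k)
  then show ?thesis
    by (rule dvd_of_nat_mult_cancel[OF charp prime_p assms])
qed

definition q_cofactor :: "'a poly poly" where
  "q_cofactor = C2 (b * a ^ (p - 2)) * F ^ (p - 1)"

lemma q_eq: "q = Yv ^ p - C2 d * q_cofactor * Yv"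
proof -
  have "p - 1 = Suc (p - 2)"
    using p_ge_2 by simp
  then have "a ^ (p - 1) = a * a ^ (p - 2)"
    by simp
  also have "\<dots> = d * (b * a ^ (p - 2))"
    by (simp add: d_mult_b flip: mult.assoc)
  finally have "a ^ (p - 1) = d * (b * a ^ (p - 2))" .
  then have "(C2 a * F) ^ (p - 1) = C2 d * q_cofactor"
    unfolding q_cofactor_def by (simp add: power_mult_distrib mult.assoc flip: C2_power C2_mult)
  then show ?thesis
    unfolding q_def by simp
qed

lemma q_cofactor_congruent:
  assumes "\<pi> dvd a"
  shows "C2 \<pi> dvd q_cofactor - in_y (smult (b * a ^ (p - 2)) (pcompose G \<theta> ^ (p - 1)))"
proof -
  have "C2 \<pi> dvd C2 a"
    using assms by (metis C2_mult dvd_def)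
  then have "C2 \<pi> dvd f - eval1 \<theta> Yv"
    unfolding f_def by simp
  then have "C2 \<pi> dvd F - eval1 G (eval1 \<theta> Yv)"
    unfolding F_def by (rule dvd_eval1_diff)
  then have "C2 \<pi> dvd C2 (b * a ^ (p - 2)) * (F ^ (p - 1) - eval1 G (eval1 \<theta> Yv) ^ (p - 1))"
    by (intro dvd_mult dvd_power_diff_power)
  moreover have "in_y (smult (b * a ^ (p - 2)) (pcompose G \<theta> ^ (p - 1)))
      = C2 (b * a ^ (p - 2)) * eval1 G (eval1 \<theta> Yv) ^ (p - 1)"
    by (simp add: in_y_eq_eval1_Yv eval1_smult is_ring_hom_power[OF is_ring_hom_eval1] eval1_pcompose)
  ultimately show ?thesis
    unfolding q_cofactor_def by (simp add: right_diff_distrib)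
qed

text \<open>Expand \<open>\<theta>\<^sup>*(q)\<close> to second order around \<open>y\<^sup>p\<close>, using that \<open>q - y\<^sup>p\<close> is divisible by \<open>d\<close>.\<close>
lemma f_minus_theta_star_q:
  obtains \<theta>1 Z where "f - eval1 (theta_star p \<theta>) q = C2 d * (C2 b * Xv + eval1 \<theta>1 Yv
      + q_cofactor * Yv * eval1 (pderiv (theta_star p \<theta>)) (Yv ^ p) - C2 d * q_cofactor ^ 2 * Yv ^ 2 * Z)"
proof -
  let ?ts = "theta_star p \<theta>"
  obtain \<theta>1 where \<theta>1: "\<theta> = pcompose ?ts (monom 1 p) + smult d \<theta>1"
    using theta_star_decomp[OF p_pos theta_y d_dvd_coeff_theta] by blast
  define T where "T = eval1 (pderiv ?ts) (Yv ^ p)"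
  define H where "H = - (C2 d * q_cofactor) * Yv"
  obtain Z where Z: "eval1 ?ts (Yv ^ p + H) - eval1 ?ts (Yv ^ p) - H * T = H ^ 2 * Z"
    using eval1_taylor_2[of H ?ts "Yv ^ p"] unfolding T_def by (elim dvdE)
  have C2_a: "C2 a = C2 d * C2 b"
    by (simp add: d_mult_b flip: C2_mult)
  have \<theta>_Yv: "eval1 \<theta> Yv = eval1 ?ts (Yv ^ p) + C2 d * eval1 \<theta>1 Yv"
    by (subst \<theta>1) (simp add: eval1_add eval1_pcompose eval1_monom_1 eval1_smult)
  have q_H: "q = Yv ^ p + H"
    unfolding q_eq H_def by simp
  have ts_q: "eval1 ?ts q = eval1 ?ts (Yv ^ p) + H * T + H ^ 2 * Z"
    using Z unfolding q_H by (simp add: algebra_simps)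
  have "f - eval1 ?ts q = C2 d * C2 b * Xv + C2 d * eval1 \<theta>1 Yv - H * T - H ^ 2 * Z"
    unfolding f_def ts_q \<theta>_Yv C2_a by (simp add: algebra_simps)
  also have "\<dots> = C2 d * (C2 b * Xv + eval1 \<theta>1 Yv + q_cofactor * Yv * T - C2 d * q_cofactor ^ 2 * Yv ^ 2 * Z)"
    unfolding H_def by (simp add: algebra_simps power2_eq_square)
  finally show ?thesis
    using that unfolding T_def by blast
qed

lemma q1_integral_reduction:
  "\<exists>q1R e. emb2 q1R = q1 \<and>
     (\<forall>\<pi>. \<pi> dvd d \<longrightarrow> C2 \<pi> dvd q1R - (C2 b * Xv + in_y e) \<and> C2 \<pi> dvd q - in_y (monom 1 p))"
proof -
  let ?ts = "theta_star p \<theta>"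
  define T where "T = eval1 (pderiv ?ts) (Yv ^ p)"
  obtain \<theta>1 Z where f_ts_q: "f - eval1 ?ts q = C2 d * (C2 b * Xv + eval1 \<theta>1 Yv + q_cofactor * Yv * T
      - C2 d * q_cofactor ^ 2 * Yv ^ 2 * Z)"
    using f_minus_theta_star_q unfolding T_def by blast
  define q1R where
    "q1R = C2 b * Xv + eval1 \<theta>1 Yv + q_cofactor * Yv * T - C2 d * q_cofactor ^ 2 * Yv ^ 2 * Z"
  have "C2 (to_fract d) * emb2 q1R = emb2 f - eval1 (map_poly to_fract ?ts) (emb2 q)"
    using arg_cong[OF f_ts_q, of emb2] unfolding q1R_def by simp
  then have "q1 = C2 (inverse (to_fract d)) * (C2 (to_fract d) * emb2 q1R)"
    unfolding q1_def by simp
  then have q1R: "emb2 q1R = q1"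
    using d_nz by (simp flip: C2_mult mult.assoc)
  define cofactor_red where "cofactor_red = smult (b * a ^ (p - 2)) (pcompose G \<theta> ^ (p - 1))"
  define e where "e = \<theta>1 + cofactor_red * [:0, 1:] * pcompose (pderiv ?ts) (monom 1 p)"
  have "in_y e = eval1 \<theta>1 Yv + in_y cofactor_red * Yv * T"
    unfolding e_def T_def
    by (simp only: is_ring_hom_add[OF is_ring_hom_in_y] is_ring_hom_mult[OF is_ring_hom_in_y] in_y_X
        in_y_eq_eval1_Yv[of \<theta>1] in_y_eq_eval1_Yv[of "pcompose (pderiv ?ts) (monom 1 p)"]
        eval1_pcompose eval1_monom_1)
  then have q1R_cong: "q1R - (C2 b * Xv + in_y e)
      = (q_cofactor - in_y cofactor_red) * (Yv * T) - C2 d * (q_cofactor ^ 2 * Yv ^ 2 * Z)"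
    unfolding q1R_def by (simp add: algebra_simps)
  have q_cong: "q - in_y (monom 1 p) = C2 d * (- q_cofactor * Yv)"
    unfolding q_eq in_y_monom_1 by simp
  have "C2 \<pi> dvd q1R - (C2 b * Xv + in_y e) \<and> C2 \<pi> dvd q - in_y (monom 1 p)" if \<pi>: "\<pi> dvd d" for \<pi>
  proof -
    have "C2 \<pi> dvd C2 d"
      using \<pi> by (metis C2_mult dvd_def)
    moreover have "C2 \<pi> dvd q_cofactor - in_y cofactor_red"
      unfolding cofactor_red_def using \<pi> d_dvd by (intro q_cofactor_congruent) (rule dvd_trans)
    ultimately show ?thesis
      unfolding q1R_cong q_cong by (meson dvd_diff dvd_mult2)
  qed
  then show ?thesis
    using q1R by blast
qed

lemma invariant_coeffs_in_Rloc_b: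
  assumes P: "P \<in> polys_over (polys_over (Rloc a))" and u: "u \<in> Rxy" and eq: "u = subst2 P q1 (emb2 q)"
  shows "P \<in> polys_over (polys_over (Rloc b))"
proof -
  obtain q1R e where q1R: "emb2 q1R = q1"
    and cong: "\<And>\<pi>. \<pi> dvd d \<Longrightarrow> C2 \<pi> dvd q1R - (C2 b * Xv + in_y e) \<and> C2 \<pi> dvd q - in_y (monom 1 p)"
    using q1_integral_reduction by blast
  obtain u0 where u0: "u = emb2 u0"
    using u unfolding Rxy_def by blast
  have "C2 \<pi> dvd W"
    if \<pi>: "prime \<pi>" "\<pi> dvd a" "\<not> \<pi> dvd b" and dvd: "C2 \<pi> dvd subst2 W q1R q" for \<pi> W
  proof -
    have "\<pi> dvd d * b"
      using \<pi>(2) by (simp add: d_mult_b)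
    then have "\<pi> dvd d"
      using \<pi>(1,3) by (simp add: prime_dvd_mult_iff)
    then have "C2 \<pi> dvd subst2 W q1R q - subst2 W (C2 b * Xv + in_y e) (in_y (monom 1 p))"
      using cong by (intro dvd_subst2_diff) auto
    with dvd have "C2 \<pi> dvd subst2 W q1R q - (subst2 W q1R q - subst2 W (C2 b * Xv + in_y e) (in_y (monom 1 p)))"
      by (rule dvd_diff)
    then have "C2 \<pi> dvd subst2 W (C2 b * Xv + in_y e) (in_y (monom 1 p))"
      by simp
    then show ?thesis
      by (rule C2_prime_dvd_subst2_linear_pth_power[OF prime_imp_prime_elem[OF \<pi>(1)] \<pi>(3) p_pos])
  qed
  moreover have "emb2 u0 = subst2 P (emb2 q1R) (emb2 q)"
    using eq unfolding u0 q1R .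
  ultimately show ?thesis
    by (rule subst2_preimage_in_polys_over_Rloc[OF a_nz b_nz _ P])
qed

end

theorem theorem6p4:
  fixes a d :: "'a::factorial_ring_gcd" and \<theta> G :: "'a poly" and p :: nat
    and f F q :: "'a poly poly" and phiX q1 :: "'a fract poly poly"
    and phi :: "'a fract poly poly \<Rightarrow> 'a fract poly poly"
  assumes charp: "CHAR('a) = p" and p_pos: "p > 0"
    and a_nz: "a \<noteq> 0"
    and theta_nz: "\<theta> \<noteq> 0" and theta_y: "coeff \<theta> 0 = 0"
    and f_def: "f = C2 a * Xv + eval1 \<theta> Yv"
    and F_def: "F = eval1 G f" and F_nz: "F \<noteq> 0"
    and phiX_def: "phiX = emb2 Xv + C2 (inverse (to_fract a)) *
          (eval1 (map_poly to_fract \<theta>) (emb2 Yv)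
           - eval1 (map_poly to_fract \<theta>) (emb2 (Yv + C2 a * F)))"
    and phi_def: "phi = (\<lambda>u. subst2 u phiX (emb2 (Yv + C2 a * F)))"
    and d_dvd_a: "[:d:] dvd [:a:]" and d_dvd_theta': "[:d:] dvd pderiv \<theta>"
    and d_gcd: "\<forall>e. e dvd [:a:] \<and> e dvd pderiv \<theta> \<longrightarrow> e dvd [:d:]"
    and q_def: "q = Yv ^ p - (C2 a * F) ^ (p - 1) * Yv"
    and q1_def: "q1 = C2 (inverse (to_fract d)) *
          (emb2 f - eval1 (map_poly to_fract (theta_star p \<theta>)) (emb2 q))"
  shows "{u \<in> Rxy. phi u = u}
       = {subst2 P q1 (emb2 q) | P. \<forall>i j. coeff (coeff P i) j \<in> Rloc (a div d)} \<inter> Rxy"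
proof -
  interpret char_p_automorphism a d \<theta> G p f F q phiX q1 phi
    by (unfold_locales; fact assms)
  show ?thesis
  proof (intro equalityI subsetI)
    fix u
    assume "u \<in> {u \<in> Rxy. phi u = u}"
    then obtain P where u: "u \<in> Rxy" "u = subst2 P q1 (emb2 q)" and "P \<in> polys_over (polys_over (Rloc a))"
      using invariant_in_Rloc_q1_q by blast
    then have "P \<in> polys_over (polys_over (Rloc (a div d)))"
      using invariant_coeffs_in_Rloc_b unfolding b_def by blast
    then show "u \<in> {subst2 P q1 (emb2 q) | P. \<forall>i j. coeff (coeff P i) j \<in> Rloc (a div d)} \<inter> Rxy"
      using u by (auto simp: polys_over_def)
  next
    fix u
    assume "u \<in> {subst2 P q1 (emb2 q) | P. \<forall>i j. coeff (coeff P i) j \<in> Rloc (a div d)} \<inter> Rxy"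
    then show "u \<in> {u \<in> Rxy. phi u = u}"
      using phi_subst2_q1_q by auto
  qed
qed

end
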